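(* Let $\mathfrak{A}$ be an atomic weakly associative relation algebra and let $\mathfrak{B}$ be its suitable structure. Then $\mathfrak{Cm}\,\mathfrak{B}$ satisfies the merry-go-round identities MGR$_n$ for all $2\le n<\omega$; in particular, for every $X\subseteq B$ and all $\kappa,\lambda,\mu$ with $\{\kappa,\lambda,\mu\}=\{0,1,2\}$, $$T^*_\kappa(E_{\kappa\lambda}\cap T^*_\lambda(E_{\lambda\mu}\cap T^*_\mu(E_{\mu\kappa}\cap T^*_\kappa X)))=T^*_\kappa(E_{\kappa\mu}\cap T^*_\mu(E_{\mu\lambda}\cap T^*_\lambda(E_{\lambda\kappa}\cap T^*_\kappa X))).$$
   Context: WA: algebras $\langle A,+,\overline{\phantom{x}},;,\breve{\phantom{x}},1'\rangle$ with $x\cdot y=\overline{\overline{x}+\overline{y}}$, $0'=\overline{1'}$, $1=1'+0'$, $0=\overline{1}$, satisfying for all $x,y,z$: $x+y=y+x$; $x+(y+z)=(x+y)+z$; $\overline{\overline{x}+\overline{y}}+\overline{\overline{x}+y}=x$; $((x\cdot 1');1);1=(x\cdot1');1$; $(x+y);z=x;z+y;z$; $x;1'=x$; $\breve{\breve{x}}=x$; $\breve{(x+y)}=\breve{x}+\breve{y}$; $\breve{(x;y)}=\breve{y};\breve{x}$; $\breve{x};\overline{x;y}+\overline{y}=\overline{y}$. Suitable structure: $B=\{s\in{}^3\mathrm{At}(\mathfrak{A}): s_2;s_0\ge s_1\}$; $T_\kappa=\{\langle s,t\rangle\in B\times B:s_\kappa=t_\kappa\}$; $E_{\kappa\kappa}=B$;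 for distinct $\kappa,\lambda$ with third index $\mu$, $E_{\kappa\lambda}=\{s\in B:s_\mu\le1'\}$. $\mathfrak{Cm}\,\mathfrak{B}=\langle\mathcal{P}(B),\cup,\cap,B\setminus\cdot,\emptyset,B,T_\kappa^*,E_{\kappa\lambda}\rangle_{\kappa,\lambda<3}$, $T_\kappa^*(X)=\{y\in B:\exists x\in X\ \langle y,x\rangle\in T_\kappa\}$, with $c_\kappa=T^*_\kappa$, $d_{\kappa\lambda}=E_{\kappa\lambda}$, $\cdot=\cap$. Merry-go-round identities: with $s^\kappa_\lambda x=c_\kappa(d_{\kappa\lambda}\cdot x)$ for $\kappa\ne\lambda$, MGR$_n$ is the set of identities $s^\lambda_{\kappa_1}s^{\kappa_1}_{\kappa_2}\cdots s^{\kappa_{n-1}}_{\kappa_n}s^{\kappa_n}_\lambda c_\lambda x=s^\lambda_{\kappa_n}s^{\kappa_n}_{\kappa_1}s^{\kappa_1}_{\kappa_2}\cdots s^{\kappa_{n-2}}_{\kappa_{n-1}}s^{\kappa_{n-1}}_\lambda c_\lambda x$ for distinct $\lambda,\kappa_1,\dots,\kappa_n<3$ (vacuous when $n\ge3$). *)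

theory Defs
  imports Main
begin

text \<open>A relation-type algebra on the whole of a type 'a, given by its operations
  plus (join), cm (complement), cp (relative composition ;), cv (converse), e (identity 1').\<close>

definition wmeet :: "('a \<Rightarrow> 'a \<Rightarrow> 'a) \<Rightarrow> ('a \<Rightarrow> 'a) \<Rightarrow> 'a \<Rightarrow> 'a \<Rightarrow> 'a" where
  "wmeet pl cm x y = cm (pl (cm x) (cm y))"

definition wtop :: "('a \<Rightarrow> 'a \<Rightarrow> 'a) \<Rightarrow> ('a \<Rightarrow> 'a) \<Rightarrow> 'a \<Rightarrow> 'a" where
  "wtop pl cm e = pl e (cm e)"

definition wbot :: "('a \<Rightarrow> 'a \<Rightarrow> 'a) \<Rightarrow> ('a \<Rightarrow> 'a) \<Rightarrow> 'a \<Rightarrow> 'a" where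
  "wbot pl cm e = cm (wtop pl cm e)"

definition wleq :: "('a \<Rightarrow> 'a \<Rightarrow> 'a) \<Rightarrow> 'a \<Rightarrow> 'a \<Rightarrow> bool" where
  "wleq pl x y \<longleftrightarrow> pl x y = y"

definition WA :: "('a \<Rightarrow> 'a \<Rightarrow> 'a) \<Rightarrow> ('a \<Rightarrow> 'a) \<Rightarrow> ('a \<Rightarrow> 'a \<Rightarrow> 'a) \<Rightarrow> ('a \<Rightarrow> 'a) \<Rightarrow> 'a \<Rightarrow> bool" where
  "WA pl cm cp cv e \<longleftrightarrow>
    (\<forall>x y. pl x y = pl y x) \<and>
    (\<forall>x y z. pl x (pl y z) = pl (pl x y) z) \<and>
    (\<forall>x y. pl (cm (pl (cm x) (cm y))) (cm (pl (cm x) y)) = x) \<and>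
    (\<forall>x. cp (cp (wmeet pl cm x e) (wtop pl cm e)) (wtop pl cm e)
          = cp (wmeet pl cm x e) (wtop pl cm e)) \<and>
    (\<forall>x y z. cp (pl x y) z = pl (cp x z) (cp y z)) \<and>
    (\<forall>x. cp x e = x) \<and>
    (\<forall>x. cv (cv x) = x) \<and>
    (\<forall>x y. cv (pl x y) = pl (cv x) (cv y)) \<and>
    (\<forall>x y. cv (cp x y) = cp (cv y) (cv x)) \<and>
    (\<forall>x y. pl (cp (cv x) (cm (cp x y))) (cm y) = cm y)"

definition wAt :: "('a \<Rightarrow> 'a \<Rightarrow> 'a) \<Rightarrow> ('a \<Rightarrow> 'a) \<Rightarrow> 'a \<Rightarrow> 'a set" where
  "wAt pl cm e = {a. a \<noteq> wbot pl cm e \<and>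
     (\<forall>x. wleq pl x a \<longrightarrow> x = wbot pl cm e \<or> x = a)}"

definition watomic :: "('a \<Rightarrow> 'a \<Rightarrow> 'a) \<Rightarrow> ('a \<Rightarrow> 'a) \<Rightarrow> 'a \<Rightarrow> bool" where
  "watomic pl cm e \<longleftrightarrow>
     (\<forall>x. x \<noteq> wbot pl cm e \<longrightarrow> (\<exists>a\<in>wAt pl cm e. wleq pl a x))"

fun sel :: "'a \<times> 'a \<times> 'a \<Rightarrow> nat \<Rightarrow> 'a" where
  "sel (a, b, c) k = (if k = 0 then a else if k = 1 then b else c)"

definition suitB :: "('a \<Rightarrow> 'a \<Rightarrow> 'a) \<Rightarrow> ('a \<Rightarrow> 'a) \<Rightarrow> ('a \<Rightarrow> 'a \<Rightarrow> 'a) \<Rightarrow> 'a \<Rightarrow> ('a \<times> 'a \<times> 'a) set" where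
  "suitB pl cm cp e = {s. sel s 0 \<in> wAt pl cm e \<and> sel s 1 \<in> wAt pl cm e \<and> sel s 2 \<in> wAt pl cm e \<and>
      wleq pl (sel s 1) (cp (sel s 2) (sel s 0))}"

definition suitT :: "('a \<times> 'a \<times> 'a) set \<Rightarrow> nat \<Rightarrow> (('a \<times> 'a \<times> 'a) \<times> ('a \<times> 'a \<times> 'a)) set" where
  "suitT B k = {(s, t). s \<in> B \<and> t \<in> B \<and> sel s k = sel t k}"

definition suitE :: "('a \<Rightarrow> 'a \<Rightarrow> 'a) \<Rightarrow> 'a \<Rightarrow> ('a \<times> 'a \<times> 'a) set \<Rightarrow> nat \<Rightarrow> nat \<Rightarrow> ('a \<times> 'a \<times> 'a) set" where
  "suitE pl e B k l = (if k = l then B else {s \<in> B. wleq pl (sel s (3 - k - l)) e})"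

definition Tstar :: "('b \<times> 'b) set \<Rightarrow> 'b set \<Rightarrow> 'b set" where
  "Tstar T X = {y. \<exists>x\<in>X. (y, x) \<in> T}"

text \<open>Complex algebra operations: c_k = T_k^*, d_{kl} = E_{kl}, s^k_l x = c_k (d_{kl} \<inter> x).\<close>
definition cmC :: "('a \<Rightarrow> 'a \<Rightarrow> 'a) \<Rightarrow> ('a \<Rightarrow> 'a) \<Rightarrow> ('a \<Rightarrow> 'a \<Rightarrow> 'a) \<Rightarrow> 'a \<Rightarrow> nat \<Rightarrow> ('a \<times> 'a \<times> 'a) set \<Rightarrow> ('a \<times> 'a \<times> 'a) set" where
  "cmC pl cm cp e k X = Tstar (suitT (suitB pl cm cp e) k) X"

definition cmS :: "('a \<Rightarrow> 'a \<Rightarrow> 'a) \<Rightarrow> ('a \<Rightarrow> 'a) \<Rightarrow> ('a \<Rightarrow> 'a \<Rightarrow> 'a) \<Rightarrow> 'a \<Rightarrow> nat \<Rightarrow> nat \<Rightarrow> ('a \<times> 'a \<times> 'a) set \<Rightarrow> ('a \<times> 'a \<times> 'a) set" where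
  "cmS pl cm cp e k l X = cmC pl cm cp e k (suitE pl e (suitB pl cm cp e) k l \<inter> X)"

fun sChain :: "('a \<Rightarrow> 'a \<Rightarrow> 'a) \<Rightarrow> ('a \<Rightarrow> 'a) \<Rightarrow> ('a \<Rightarrow> 'a \<Rightarrow> 'a) \<Rightarrow> 'a \<Rightarrow> nat list \<Rightarrow> ('a \<times> 'a \<times> 'a) set \<Rightarrow> ('a \<times> 'a \<times> 'a) set" where
  "sChain pl cm cp e (a # b # rest) X = cmS pl cm cp e a b (sChain pl cm cp e (b # rest) X)"
| "sChain pl cm cp e _ X = X"

definition MGR_Cm :: "('a \<Rightarrow> 'a \<Rightarrow> 'a) \<Rightarrow> ('a \<Rightarrow> 'a) \<Rightarrow> ('a \<Rightarrow> 'a \<Rightarrow> 'a) \<Rightarrow> 'a \<Rightarrow> nat \<Rightarrow> bool" where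
  "MGR_Cm pl cm cp e n \<longleftrightarrow>
    (\<forall>lam ks X. length ks = n \<longrightarrow> distinct (lam # ks) \<longrightarrow> (\<forall>k\<in>set (lam # ks). k < 3) \<longrightarrow>
       X \<subseteq> suitB pl cm cp e \<longrightarrow>
       sChain pl cm cp e (lam # ks @ [lam]) (cmC pl cm cp e lam X)
     = sChain pl cm cp e (lam # last ks # butlast ks @ [lam]) (cmC pl cm cp e lam X))"

end

(* In an atomic WA, if a triple s of B has its mu-th coordinate below 1', then the other
   two coordinates determine each other: they are equal, or converse to each other when mu = 1.
   Conversely every atom occurs in any prescribed position of such a triple, because each atom a
   has subidentity atoms d, r with a <= d;a and a <= a;r. Hence the operator s^i_j maps
   {v in B. v_j in S} to {v in B. v_i in S'} with S' the preimage of S under identity or converse,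
   and a round trip k -> l -> m -> k applies the converse exactly once, whichever way round it
   goes. For n >= 3 there are no n + 1 distinct indices below 3, so MGR_n is vacuous. *)

theory Submission
  imports Defs
begin

locale huntington =
  fixes pl :: "'a \<Rightarrow> 'a \<Rightarrow> 'a" and cm :: "'a \<Rightarrow> 'a"
  assumes pl_commute: "pl x y = pl y x"
    and pl_assoc: "pl x (pl y z) = pl (pl x y) z"
    and huntington: "pl (cm (pl (cm x) (cm y))) (cm (pl (cm x) y)) = x"
begin

sublocale pl: abel_semigroup pl
  by unfold_locales (rule pl_assoc[symmetric], rule pl_commute)

lemma cm_cm [simp]: "cm (cm x) = x"
  by (smt (verit) pl_assoc pl_commute huntington)

lemma pl_cm_self_const: "pl x (cm x) = pl y (cm y)"
  by (smt (verit) pl_assoc pl_commute cm_cm huntington)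

lemma pl_top_absorb: "pl (pl x (cm x)) y = pl x (cm x)"
proof -
  have "pl (pl x (cm x)) y = pl (cm y) (pl y y)"
    using pl_cm_self_const[of x "cm y"] by (simp add: ac_simps)
  also have "\<dots> = pl (pl (cm (pl y (cm y))) (cm (pl y y))) (pl y y)"
    using huntington[of "cm y" "cm y"] by (simp add: pl.commute)
  also have "\<dots> = pl (cm (pl y (cm y))) (pl (pl y y) (cm (pl y y)))"
    by (simp add: ac_simps)
  also have "\<dots> = pl x (cm x)"
    using pl_cm_self_const[of "pl y y" y] pl_cm_self_const[of "cm (pl y (cm y))" x]
    by (simp add: pl.commute)
  finally show ?thesis .
qed

lemma pl_bot: "pl y (cm (pl x (cm x))) = y"
proof -
  let ?zero = "cm (pl x (cm x))"
  have "pl ?zero ?zero = cm (pl (cm ?zero) (cm ?zero))"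
    using huntington[of ?zero ?zero] pl_top_absorb by (simp add: pl.commute)
  also have "\<dots> = ?zero"
    by (simp add: pl_top_absorb)
  finally have zero_idem: "pl ?zero ?zero = ?zero" .
  have "y = pl (cm (pl (cm y) (cm y))) ?zero"
    using huntington[of y y] pl_cm_self_const[of "cm y" x] by (simp add: pl.commute)
  then show ?thesis
    by (metis pl.assoc zero_idem)
qed

lemma pl_idem: "pl x x = x"
proof -
  have "cm (pl (cm y) (cm y)) = y" for y
    using huntington[of y y] pl_bot by (metis pl.commute pl_cm_self_const)
  from this[of "cm x"] show ?thesis
    by (metis cm_cm)
qed

lemma meet_absorb: "pl (cm (pl (cm x) (cm y))) x = x"
  by (metis huntington pl.assoc pl_idem)

lemma meet_eq_bot_imp_pl_cm:
  assumes "cm (pl (cm x) (cm y)) = cm (pl z (cm z))"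
  shows "pl x (cm y) = cm y"
proof -
  have "x = cm (pl (cm x) y)"
    using huntington[of x "cm y"] assms by (simp add: pl_bot)
  then show ?thesis
    by (metis meet_absorb pl.commute cm_cm)
qed

end

locale weakly_assoc_ra =
  fixes pl :: "'a \<Rightarrow> 'a \<Rightarrow> 'a" and cm :: "'a \<Rightarrow> 'a" and cp :: "'a \<Rightarrow> 'a \<Rightarrow> 'a"
    and cv :: "'a \<Rightarrow> 'a" and e :: 'a
  assumes WA: "WA pl cm cp cv e"
begin

abbreviation leq :: "'a \<Rightarrow> 'a \<Rightarrow> bool" (infix "\<preceq>" 50)
  where "x \<preceq> y \<equiv> wleq pl x y"

abbreviation zero :: 'a
  where "zero \<equiv> wbot pl cm e"

abbreviation atoms :: "'a set"
  where "atoms \<equiv> wAt pl cm e"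

lemma comp_distrib_right: "cp (pl x y) z = pl (cp x z) (cp y z)"
  using WA unfolding WA_def by blast

lemma comp_unit_right [simp]: "cp x e = x"
  using WA unfolding WA_def by blast

lemma cv_cv [simp]: "cv (cv x) = x"
  using WA unfolding WA_def by blast

lemma cv_pl: "cv (pl x y) = pl (cv x) (cv y)"
  using WA unfolding WA_def by blast

lemma cv_comp: "cv (cp x y) = cp (cv y) (cv x)"
  using WA unfolding WA_def by blast

lemma cv_comp_cm_leq: "cp (cv x) (cm (cp x y)) \<preceq> cm y"
  using WA unfolding WA_def wleq_def by blast

sublocale huntington pl cm
  using WA unfolding WA_def by unfold_locales blast+

lemma leq_trans: "x \<preceq> y \<Longrightarrow> y \<preceq> z \<Longrightarrow> x \<preceq> z"
  unfolding wleq_def by (metis pl.assoc)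

lemma leq_antisym: "x \<preceq> y \<Longrightarrow> y \<preceq> x \<Longrightarrow> x = y"
  unfolding wleq_def by (metis pl.commute)

lemma zero_leq: "zero \<preceq> x"
  unfolding wleq_def wbot_def wtop_def by (metis pl.commute pl_bot)

lemma leq_cm_self_imp_zero: "x \<preceq> cm x \<Longrightarrow> x = zero"
  unfolding wleq_def wbot_def wtop_def by (metis pl_cm_self_const cm_cm)

lemma meet_eq_zero_imp_leq_cm: "wmeet pl cm x y = zero \<Longrightarrow> x \<preceq> cm y"
  unfolding wleq_def wbot_def wtop_def wmeet_def by (rule meet_eq_bot_imp_pl_cm)

lemma meet_leq_left: "wmeet pl cm x y \<preceq> x"
  unfolding wleq_def wmeet_def by (rule meet_absorb)

lemma meet_leq_right: "wmeet pl cm x y \<preceq> y"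
  unfolding wleq_def wmeet_def by (metis meet_absorb pl.commute)

lemma atom_neq_zero: "a \<in> atoms \<Longrightarrow> a \<noteq> zero"
  unfolding wAt_def by blast

lemma atom_leq_atom_eq: "a \<in> atoms \<Longrightarrow> b \<in> atoms \<Longrightarrow> a \<preceq> b \<Longrightarrow> a = b"
  unfolding wAt_def by blast

lemma atom_leq_or_leq_cm:
  assumes "a \<in> atoms"
  shows "a \<preceq> y \<or> a \<preceq> cm y"
proof -
  have "wmeet pl cm a y = zero \<or> wmeet pl cm a y = a"
    using assms meet_leq_left unfolding wAt_def by blast
  then show ?thesis
    using meet_eq_zero_imp_leq_cm meet_leq_right by metis
qed

lemma comp_mono_left: "x \<preceq> y \<Longrightarrow> cp x z \<preceq> cp y z"
  unfolding wleq_def by (metis comp_distrib_right)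

lemma comp_distrib_left: "cp z (pl x y) = pl (cp z x) (cp z y)"
  by (metis cv_cv cv_comp cv_pl comp_distrib_right)

lemma comp_mono_right: "x \<preceq> y \<Longrightarrow> cp z x \<preceq> cp z y"
  unfolding wleq_def by (metis comp_distrib_left)

lemma cv_mono: "x \<preceq> y \<Longrightarrow> cv x \<preceq> cv y"
  unfolding wleq_def by (metis cv_pl)

lemma cv_unit [simp]: "cv e = e"
  by (metis comp_unit_right cv_comp cv_cv)

lemma comp_unit_left [simp]: "cp e x = x"
  by (metis comp_unit_right cv_comp cv_cv cv_unit)

lemma cv_zero: "cv zero = zero"
proof -
  have "cv zero \<preceq> cv (cv zero)"
    by (rule cv_mono[OF zero_leq])
  then show ?thesis
    using zero_leq leq_antisym by simp
qed

lemma cv_atom: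
  assumes "a \<in> atoms"
  shows "cv a \<in> atoms"
proof -
  have "cv a \<noteq> zero"
    using assms atom_neq_zero cv_zero by (metis cv_cv)
  moreover have "x = zero \<or> x = cv a" if "x \<preceq> cv a" for x
  proof -
    have "cv x = zero \<or> cv x = a"
      using cv_mono[OF that] assms unfolding wAt_def by simp
    then show ?thesis
      using cv_zero by (metis cv_cv)
  qed
  ultimately show ?thesis
    unfolding wAt_def by blast
qed

lemma atom_leq_cv_comp:
  assumes "b \<in> atoms" "c \<in> atoms" "c \<preceq> cp a b"
  shows "b \<preceq> cp (cv a) c"
proof (rule ccontr)
  assume "\<not> b \<preceq> cp (cv a) c"
  then have "cp a b \<preceq> cp a (cm (cp (cv a) c))"
    using atom_leq_or_leq_cm assms(1) comp_mono_right by blast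
  moreover have "cp a (cm (cp (cv a) c)) \<preceq> cm c"
    using cv_comp_cm_leq[of "cv a" c] by simp
  ultimately have "c \<preceq> cm c"
    using assms(3) leq_trans by blast
  then show False
    using leq_cm_self_imp_zero atom_neq_zero assms(2) by blast
qed

lemma atom_leq_comp_cv:
  assumes "a \<in> atoms" "c \<in> atoms" "c \<preceq> cp a b"
  shows "a \<preceq> cp c (cv b)"
proof -
  have "cv c \<preceq> cp (cv b) (cv a)"
    using cv_mono[OF assms(3)] by (simp add: cv_comp)
  then have "cv a \<preceq> cp b (cv c)"
    using atom_leq_cv_comp[of "cv a" "cv c" "cv b"] cv_atom assms by simp
  then show ?thesis
    using cv_mono by (fastforce simp: cv_comp)
qed

lemma atom_leq_subid_comp_eq:
  "a \<in> atoms \<Longrightarrow> b \<in> atoms \<Longrightarrow> d \<preceq> e \<Longrightarrow> b \<preceq> cp d a \<Longrightarrow> b = a"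
  using comp_mono_left[of d e a] leq_trans atom_leq_atom_eq by fastforce

lemma atom_leq_comp_subid_eq:
  "c \<in> atoms \<Longrightarrow> b \<in> atoms \<Longrightarrow> d \<preceq> e \<Longrightarrow> b \<preceq> cp c d \<Longrightarrow> b = c"
  using comp_mono_right[of d e c] leq_trans atom_leq_atom_eq by fastforce

lemma subid_atom_leq_comp_eq_cv:
  assumes "a \<in> atoms" "c \<in> atoms" "d \<in> atoms" "d \<preceq> e" "d \<preceq> cp c a"
  shows "a = cv c"
proof -
  have "a \<preceq> cp (cv c) d"
    using atom_leq_cv_comp assms by blast
  then have "a \<preceq> cv c"
    using comp_mono_right[OF assms(4), of "cv c"] leq_trans by simp
  then show ?thesis
    using atom_leq_atom_eq cv_atom assms(1,2) by blast
qed

end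

lemma length_distinct_bounded:
  assumes "distinct xs" "set xs \<subseteq> {..<n}"
  shows "length xs \<le> n"
  using card_mono[OF finite_lessThan assms(2)] distinct_card[OF assms(1)] by simp

lemma eq_0_1_2_imp_distinct:
  assumes "{k, l, m} = {0, 1, 2::nat}"
  shows "distinct [k, l, m] \<and> k < 3 \<and> l < 3 \<and> m < 3"
proof -
  have "card (set [k, l, m]) = length [k, l, m]"
    using assms by simp
  then have "distinct [k, l, m]"
    by (rule card_distinct)
  moreover have "set [k, l, m] \<subseteq> {..<3}"
    using assms by auto
  ultimately show ?thesis
    by simp
qed

lemma suitE_subset: "suitE pl e B k l \<subseteq> B"
  unfolding suitE_def by auto

lemma less_3_iff: "(i::nat) < 3 \<longleftrightarrow> i = 0 \<or> i = 1 \<or> i = 2"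
  by auto

lemma Tstar_suitT: "Tstar (suitT B k) X = {v \<in> B. sel v k \<in> (\<lambda>x. sel x k) ` (X \<inter> B)}"
  unfolding Tstar_def suitT_def by auto

locale atomic_wa = weakly_assoc_ra +
  assumes atomic: "watomic pl cm e"
begin

lemma subid_atom_domain_ex:
  assumes "a \<in> atoms"
  shows "\<exists>d\<in>atoms. d \<preceq> e \<and> d \<preceq> cp a (cv a) \<and> a \<preceq> cp d a"
proof -
  have "wmeet pl cm e (cp a (cv a)) \<noteq> zero"
  proof
    assume "wmeet pl cm e (cp a (cv a)) = zero"
    then have "cp (cv a) e \<preceq> cp (cv a) (cm (cp a (cv a)))"
      by (intro comp_mono_right meet_eq_zero_imp_leq_cm)
    then have "cv a \<preceq> cm (cv a)"
      using cv_comp_cm_leq[of a "cv a"] leq_trans by simp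
    then show False
      using leq_cm_self_imp_zero atom_neq_zero cv_atom assms by blast
  qed
  then obtain d where d: "d \<in> atoms" "d \<preceq> wmeet pl cm e (cp a (cv a))"
    using atomic unfolding watomic_def by blast
  then have "d \<preceq> e" "d \<preceq> cp a (cv a)"
    using meet_leq_left meet_leq_right leq_trans by blast+
  moreover have "a \<preceq> cp d a"
    using atom_leq_comp_cv[OF assms d(1) \<open>d \<preceq> cp a (cv a)\<close>] by simp
  ultimately show ?thesis
    using d(1) by blast
qed

lemma subid_atom_range_ex:
  assumes "a \<in> atoms"
  shows "\<exists>r\<in>atoms. r \<preceq> e \<and> r \<preceq> cp (cv a) a \<and> a \<preceq> cp a r"
proof -
  obtain d where d: "d \<in> atoms" "d \<preceq> e" "d \<preceq> cp (cv a) a" "cv a \<preceq> cp d (cv a)"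
    using subid_atom_domain_ex[of "cv a"] cv_atom assms by auto
  have "cv d \<preceq> e"
    using cv_mono[OF d(2)] by simp
  moreover have "cv d \<preceq> cp (cv a) a"
    using cv_mono[OF d(3)] by (simp add: cv_comp)
  moreover have "a \<preceq> cp a (cv d)"
    using cv_mono[OF d(4)] by (simp add: cv_comp)
  ultimately show ?thesis
    using cv_atom[OF d(1)] by blast
qed

abbreviation B :: "('a \<times> 'a \<times> 'a) set"
  where "B \<equiv> suitB pl cm cp e"

text \<open>\<open>twist \<mu>\<close> carries one free coordinate of a triple in E to the other, \<open>\<mu>\<close> being
  the index of the coordinate below 1'.\<close>

definition twist :: "nat \<Rightarrow> 'a \<Rightarrow> 'a"
  where "twist \<mu> a = (if \<mu> = 1 then cv a else a)"

lemma twist_cycle: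
  assumes "distinct [k, l, m]" "k < 3" "l < 3" "m < 3"
  shows "twist l (twist k (twist m a)) = cv a"
proof -
  have "k = 1 \<or> l = 1 \<or> m = 1"
    using assms by (auto simp: less_3_iff)
  then show ?thesis
    using assms(1) by (auto simp: twist_def)
qed

lemma suitB_iff: "(a, b, c) \<in> B \<longleftrightarrow> a \<in> atoms \<and> b \<in> atoms \<and> c \<in> atoms \<and> b \<preceq> cp c a"
  unfolding suitB_def by simp

lemma sel_suitB_atom: "s \<in> B \<Longrightarrow> i < 3 \<Longrightarrow> sel s i \<in> atoms"
  by (cases s) (auto simp: suitB_iff)

lemma suitE_sel_twist:
  assumes "s \<in> suitE pl e B i j" "distinct [i, j, \<mu>]" "i < 3" "j < 3" "\<mu> < 3"
  shows "sel s j = twist \<mu> (sel s i)"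
proof -
  obtain a b c where s: "s = (a, b, c)"
    by (cases s)
  have ijk: "(i, j, \<mu>) \<in> {(0, 1, 2), (1, 0, 2), (0, 2, 1), (2, 0, 1), (1, 2, 0), (2, 1, 0)}"
    using assms(2-5) by (auto simp: less_3_iff)
  have abc: "a \<in> atoms" "b \<in> atoms" "c \<in> atoms" "b \<preceq> cp c a"
    and subid: "sel s \<mu> \<preceq> e"
    using assms(1,2) ijk s by (auto simp: suitE_def suitB_iff)
  have "c \<preceq> e \<Longrightarrow> b = a"
    using atom_leq_subid_comp_eq abc by blast
  moreover have "a \<preceq> e \<Longrightarrow> b = c"
    using atom_leq_comp_subid_eq abc by blast
  moreover have "b \<preceq> e \<Longrightarrow> a = cv c"
    using subid_atom_leq_comp_eq_cv abc by blast
  ultimately show ?thesis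
    using ijk subid s by (auto simp: twist_def)
qed

lemma suitE_sel_ex:
  assumes "a \<in> atoms" "i \<noteq> j" "i < 3" "j < 3"
  shows "\<exists>s \<in> suitE pl e B i j. sel s i = a"
proof -
  obtain d where d: "d \<in> atoms" "d \<preceq> e" "d \<preceq> cp a (cv a)" "a \<preceq> cp d a"
    using subid_atom_domain_ex[OF assms(1)] by blast
  obtain r where r: "r \<in> atoms" "r \<preceq> e" "r \<preceq> cp (cv a) a" "a \<preceq> cp a r"
    using subid_atom_range_ex[OF assms(1)] by blast
  have "(a, a, d) \<in> B" "(r, a, a) \<in> B" "(a, r, cv a) \<in> B" "(cv a, d, a) \<in> B"
    using d r assms(1) cv_atom by (simp_all add: suitB_iff)
  moreover have "(i, j) \<in> {(0, 1), (1, 0), (0, 2), (2, 0), (1, 2), (2, 1)}"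
    using assms(2-4) by (auto simp: less_3_iff)
  ultimately have "\<exists>s \<in> {(a, a, d), (r, a, a), (a, r, cv a), (cv a, d, a)}.
      s \<in> suitE pl e B i j \<and> sel s i = a"
    using d(2) r(2) by (auto simp: suitE_def)
  then show ?thesis
    by blast
qed

lemma Tstar_suitT_suitE:
  assumes "distinct [i, j, \<mu>]" "i < 3" "j < 3" "\<mu> < 3"
  shows "Tstar (suitT B i) (suitE pl e B i j \<inter> {y \<in> B. sel y j \<in> S})
    = {v \<in> B. sel v i \<in> twist \<mu> -` S}"
proof (intro set_eqI iffI)
  fix v
  assume "v \<in> Tstar (suitT B i) (suitE pl e B i j \<inter> {y \<in> B. sel y j \<in> S})"
  then obtain s where s: "v \<in> B" "s \<in> suitE pl e B i j" "sel s j \<in> S" "sel v i = sel s i"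
    unfolding Tstar_def suitT_def by auto
  have "twist \<mu> (sel v i) \<in> S"
    using s(3,4) suitE_sel_twist[OF s(2) assms] by (simp only:)
  then show "v \<in> {v \<in> B. sel v i \<in> twist \<mu> -` S}"
    using s(1) by blast
next
  fix v
  assume v: "v \<in> {v \<in> B. sel v i \<in> twist \<mu> -` S}"
  have "sel v i \<in> atoms" "i \<noteq> j"
    using v sel_suitB_atom assms(1,2) by auto
  then obtain s where s: "s \<in> suitE pl e B i j" "sel s i = sel v i"
    using suitE_sel_ex assms(2,3) by blast
  then have "s \<in> B" "sel s j \<in> S"
    using v suitE_subset[of pl e B i j] suitE_sel_twist[OF s(1) assms] by auto
  then show "v \<in> Tstar (suitT B i) (suitE pl e B i j \<inter> {y \<in> B. sel y j \<in> S})"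
    using v s unfolding Tstar_def suitT_def by (auto intro!: bexI[of _ s])
qed

text \<open>Each step transports a coordinate by a twist, and exactly one of the three twists is the
  converse; so the result does not depend on the direction of the cycle.\<close>

lemma merry_go_round_eq_converse:
  assumes "distinct [k, l, m]" "k < 3" "l < 3" "m < 3"
  shows "Tstar (suitT B k) (suitE pl e B k l \<inter> Tstar (suitT B l) (suitE pl e B l m \<inter>
      Tstar (suitT B m) (suitE pl e B m k \<inter> Tstar (suitT B k) X)))
    = {v \<in> B. cv (sel v k) \<in> (\<lambda>x. sel x k) ` (X \<inter> B)}"
proof -
  let ?S = "(\<lambda>x. sel x k) ` (X \<inter> B)"
  have step_m: "Tstar (suitT B m) (suitE pl e B m k \<inter> Tstar (suitT B k) X)
      = {v \<in> B. sel v m \<in> twist l -` ?S}"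
    unfolding Tstar_suitT[of B k X] by (rule Tstar_suitT_suitE) (use assms in auto)
  have step_l: "Tstar (suitT B l) (suitE pl e B l m \<inter> Tstar (suitT B m)
      (suitE pl e B m k \<inter> Tstar (suitT B k) X)) = {v \<in> B. sel v l \<in> twist k -` twist l -` ?S}"
    unfolding step_m by (rule Tstar_suitT_suitE) (use assms in auto)
  have "Tstar (suitT B k) (suitE pl e B k l \<inter> Tstar (suitT B l) (suitE pl e B l m \<inter>
      Tstar (suitT B m) (suitE pl e B m k \<inter> Tstar (suitT B k) X)))
    = {v \<in> B. sel v k \<in> twist m -` twist k -` twist l -` ?S}"
    unfolding step_l by (rule Tstar_suitT_suitE) (use assms in auto)
  also have "\<dots> = {v \<in> B. cv (sel v k) \<in> ?S}"
    using twist_cycle[OF assms] by auto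
  finally show ?thesis .
qed

lemma merry_go_round:
  assumes "distinct [k, l, m]" "k < 3" "l < 3" "m < 3"
  shows "Tstar (suitT B k) (suitE pl e B k l \<inter> Tstar (suitT B l) (suitE pl e B l m \<inter>
      Tstar (suitT B m) (suitE pl e B m k \<inter> Tstar (suitT B k) X)))
    = Tstar (suitT B k) (suitE pl e B k m \<inter> Tstar (suitT B m) (suitE pl e B m l \<inter>
      Tstar (suitT B l) (suitE pl e B l k \<inter> Tstar (suitT B k) X)))"
proof -
  have "distinct [k, m, l]"
    using assms(1) by auto
  then show ?thesis
    using merry_go_round_eq_converse assms by simp
qed

lemma MGR_Cm_holds:
  assumes "2 \<le> n"
  shows "MGR_Cm pl cm cp e n"
  unfolding MGR_Cm_def
proof (intro allI impI)
  fix lam :: nat and ks :: "nat list" and X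
  assume len: "length ks = n" and dist: "distinct (lam # ks)"
    and lt: "\<forall>k\<in>set (lam # ks). k < 3"
  have "Suc (length ks) \<le> 3"
    using length_distinct_bounded[OF dist] lt by fastforce
  then have "length ks = Suc (Suc 0)"
    using len assms by simp
  then obtain k1 k2 where ks: "ks = [k1, k2]"
    by (auto simp: length_Suc_conv)
  show "sChain pl cm cp e (lam # ks @ [lam]) (cmC pl cm cp e lam X)
      = sChain pl cm cp e (lam # last ks # butlast ks @ [lam]) (cmC pl cm cp e lam X)"
    using merry_go_round[of lam k1 k2 X] dist lt by (simp add: ks cmS_def cmC_def)
qed

end

theorem lemma7:
  fixes pl :: "'a \<Rightarrow> 'a \<Rightarrow> 'a" and cm :: "'a \<Rightarrow> 'a" and cp :: "'a \<Rightarrow> 'a \<Rightarrow> 'a"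
    and cv :: "'a \<Rightarrow> 'a" and e :: 'a
  assumes "WA pl cm cp cv e" and "watomic pl cm e"
  defines "B \<equiv> suitB pl cm cp e"
  shows "(\<forall>n. 2 \<le> n \<longrightarrow> MGR_Cm pl cm cp e n) \<and>
    (\<forall>X k l m. X \<subseteq> B \<longrightarrow> {k, l, m} = {0, 1, 2::nat} \<longrightarrow>
       Tstar (suitT B k) (suitE pl e B k l \<inter> Tstar (suitT B l) (suitE pl e B l m \<inter>
         Tstar (suitT B m) (suitE pl e B m k \<inter> Tstar (suitT B k) X)))
     = Tstar (suitT B k) (suitE pl e B k m \<inter> Tstar (suitT B m) (suitE pl e B m l \<inter>
         Tstar (suitT B l) (suitE pl e B l k \<inter> Tstar (suitT B k) X))))"
proof -
  interpret atomic_wa pl cm cp cv e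
    by unfold_locales (fact assms)+
  show ?thesis
  proof (intro conjI allI impI)
    fix n :: nat
    assume "2 \<le> n"
    then show "MGR_Cm pl cm cp e n"
      by (rule MGR_Cm_holds)
  next
    fix X and k l m :: nat
    assume "{k, l, m} = {0, 1, 2}"
    then have "distinct [k, l, m]" "k < 3" "l < 3" "m < 3"
      using eq_0_1_2_imp_distinct by blast+
    then show "Tstar (suitT B k) (suitE pl e B k l \<inter> Tstar (suitT B l) (suitE pl e B l m \<inter>
         Tstar (suitT B m) (suitE pl e B m k \<inter> Tstar (suitT B k) X)))
     = Tstar (suitT B k) (suitE pl e B k m \<inter> Tstar (suitT B m) (suitE pl e B m l \<inter>
         Tstar (suitT B l) (suitE pl e B l k \<inter> Tstar (suitT B k) X)))"
      unfolding B_def by (rule merry_go_round)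
  qed
qed

end
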